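(* Let $m\in\mathbb{N}$ and $\mathbb{E}_m=\mathbb{E}^{\otimes_{\mathbb{R}}m}$. There exists an ordering $Q_m$ on the ring $\mathbb{E}_m$ (i.e. $\mathbb{E}_m=Q_m\sqcup\{0\}\sqcup(-Q_m)$, $Q_m+Q_m\subset Q_m$, $Q_mQ_m\subset Q_m$) such that $Q^{\otimes_{\mathbb{R}}m}\subseteq Q_m$, i.e. every simple tensor $u_1\otimes\cdots\otimes u_m$ with all $u_i\in Q$ lies in $Q_m$.
   Context: $\mathbb{E}=\bigcup_{n\geq1}\mathbb{R}((t^{1/n}))$ is the field of Puiseux series over $\mathbb{R}$. For $f\in\mathbb{E}\setminus\{0\}$ let $\mathfrak{c}(f)$ be the coefficient of its nonzero term of smallest $t$-exponent, and $Q=\{f\in\mathbb{E}:\mathfrak{c}(f)>0\}$ (an ordering of $\mathbb{E}$). Tensor products are over $\mathbb{R}$. *)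

theory Defs
  imports Complex_Main
begin

text \<open>Puiseux series over the reals, represented by their coefficient functions
  (exponent in the rationals to real coefficient).\<close>

definition puiseux :: "(rat \<Rightarrow> real) set" where
  "puiseux = {f. \<exists>n::nat. n > 0 \<and> (\<exists>N::rat. \<forall>q. f q \<noteq> 0 \<longrightarrow>
      N \<le> q \<and> (\<exists>k::int. q = of_int k / of_nat n))}"

text \<open>Product of Puiseux series (Cauchy product; each sum is finite for Puiseux series).\<close>
definition pmult :: "(rat \<Rightarrow> real) \<Rightarrow> (rat \<Rightarrow> real) \<Rightarrow> rat \<Rightarrow> real" where
  "pmult f g = (\<lambda>q. \<Sum>a\<in>{a. f a \<noteq> 0 \<and> g (q - a) \<noteq> 0}. f a * g (q - a))"

definition puiseux_pos :: "(rat \<Rightarrow> real) set" where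
  "puiseux_pos = {f \<in> puiseux. \<exists>q. f q > 0 \<and> (\<forall>p<q. f p = 0)}"

text \<open>The m-fold tensor product over R is the quotient of the free real vector space on
  m-tuples of Puiseux series (finitely supported functions on lists of length m) by the
  subspace spanned by the multilinearity relations.\<close>

definition free_tensors :: "nat \<Rightarrow> ((rat \<Rightarrow> real) list \<Rightarrow> real) set" where
  "free_tensors m = {x. finite {t. x t \<noteq> 0} \<and>
      (\<forall>t. x t \<noteq> 0 \<longrightarrow> length t = m \<and> set t \<subseteq> puiseux)}"

definition simple_tensor :: "(rat \<Rightarrow> real) list \<Rightarrow> (rat \<Rightarrow> real) list \<Rightarrow> real" where
  "simple_tensor t = (\<lambda>s. if s = t then 1 else 0)"

inductive_set tensor_relations :: "nat \<Rightarrow> ((rat \<Rightarrow> real) list \<Rightarrow> real) set"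
  for m :: nat where
  zero: "(\<lambda>_. 0) \<in> tensor_relations m"
| add_rel: "\<lbrakk>length us = m; set us \<subseteq> puiseux; i < m; a \<in> puiseux; b \<in> puiseux\<rbrakk> \<Longrightarrow>
    (\<lambda>s. simple_tensor (us[i := (\<lambda>q. a q + b q)]) s - simple_tensor (us[i := a]) s
          - simple_tensor (us[i := b]) s) \<in> tensor_relations m"
| smult_rel: "\<lbrakk>length us = m; set us \<subseteq> puiseux; i < m; a \<in> puiseux\<rbrakk> \<Longrightarrow>
    (\<lambda>s. simple_tensor (us[i := (\<lambda>q. c * a q)]) s - c * simple_tensor (us[i := a]) s)
      \<in> tensor_relations m"
| add: "\<lbrakk>x \<in> tensor_relations m; y \<in> tensor_relations m\<rbrakk> \<Longrightarrow>
    (\<lambda>s. x s + y s) \<in> tensor_relations m"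
| scale: "x \<in> tensor_relations m \<Longrightarrow> (\<lambda>s. c * x s) \<in> tensor_relations m"

definition tensor_equiv :: "nat \<Rightarrow> ((rat \<Rightarrow> real) list \<Rightarrow> real) \<Rightarrow> ((rat \<Rightarrow> real) list \<Rightarrow> real) \<Rightarrow> bool" where
  "tensor_equiv m x y \<longleftrightarrow> (\<lambda>s. x s - y s) \<in> tensor_relations m"

text \<open>Ring multiplication of E_m on representatives:
  (u1 x ... x um)(v1 x ... x vm) = (u1 v1) x ... x (um vm), extended bilinearly.\<close>
definition tensor_mult :: "((rat \<Rightarrow> real) list \<Rightarrow> real) \<Rightarrow> ((rat \<Rightarrow> real) list \<Rightarrow> real) \<Rightarrow> (rat \<Rightarrow> real) list \<Rightarrow> real" where
  "tensor_mult x y = (\<lambda>s. \<Sum>(t, u)\<in>{(t, u). x t \<noteq> 0 \<and> y u \<noteq> 0 \<and> map2 pmult t u = s}. x t * y u)"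

end

theory Submission
  imports Defs "HOL-Library.List_Lexorder"
begin

text \<open>
  Read a tensor as a series in \<open>m\<close> variables: \<open>u\<^sub>1 \<otimes> \<dots> \<otimes> u\<^sub>m\<close> has coefficient
  \<open>u\<^sub>1(e\<^sub>1) \<cdots> u\<^sub>m(e\<^sub>m)\<close> at the exponent vector \<open>e \<in> \<rat>\<^sup>m\<close>.  This coefficient map is linear,
  its kernel is exactly the span of the multilinearity relations (by induction on \<open>m\<close>, rewriting
  linearly dependent first factors away), and it turns the product of \<open>E\<^sub>m\<close> into convolution.
  The exponents of a fixed tensor lie in a grid \<open>((1/n)\<int> \<inter> [M, \<infinity>))\<^sup>m\<close>, which is well
  ordered lexicographically, so a nonzero tensor has a lexicographically least exponent with
  nonzero coefficient; \<open>Q\<^sub>m\<close> consists of the tensors whose coefficient there is positive.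
  Under multiplication leading exponents add and leading coefficients multiply, which gives
  \<open>Q\<^sub>m Q\<^sub>m \<subseteq> Q\<^sub>m\<close>; for \<open>u\<^sub>i \<in> Q\<close> the leading exponent of \<open>u\<^sub>1 \<otimes> \<dots> \<otimes> u\<^sub>m\<close> is the vector of
  the leading exponents of the \<open>u\<^sub>i\<close>.
\<close>

section \<open>Grids of exponents\<close>

definition grid :: "nat \<Rightarrow> rat \<Rightarrow> rat set" where
  "grid n M = {q. M \<le> q \<and> (\<exists>k::int. q = of_int k / of_nat n)}"

lemma puiseux_iff_grid: "f \<in> puiseux \<longleftrightarrow> (\<exists>n>0. \<exists>M. {q. f q \<noteq> 0} \<subseteq> grid n M)"
  unfolding puiseux_def grid_def by (simp add: subset_iff)

lemma finite_grid_atMost: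
  assumes "n > 0"
  shows "finite (grid n M \<inter> {..U})"
proof (rule finite_subset)
  let ?K = "{\<lceil>M * of_nat n\<rceil>..\<lfloor>U * of_nat n\<rfloor>}"
  show "grid n M \<inter> {..U} \<subseteq> (\<lambda>k. of_int k / of_nat n) ` ?K"
  proof
    fix q assume "q \<in> grid n M \<inter> {..U}"
    then obtain k :: int where q: "q = of_int k / of_nat n" "M \<le> q" "q \<le> U"
      by (auto simp: grid_def)
    have n: "(of_nat n :: rat) > 0" using assms by simp
    have "q * of_nat n = of_int k" using q(1) n by simp
    moreover have "M * of_nat n \<le> q * of_nat n" using q(2) n by (intro mult_right_mono) auto
    moreover have "q * of_nat n \<le> U * of_nat n" using q(3) n by (intro mult_right_mono) auto
    ultimately have "M * of_nat n \<le> of_int k" "of_int k \<le> U * of_nat n" by simp_all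
    then have "k \<in> ?K" by (simp add: ceiling_le_iff le_floor_iff)
    then show "q \<in> (\<lambda>k. of_int k / of_nat n) ` ?K" using q(1) by blast
  qed
qed simp

lemma grid_subset_grid_mult:
  assumes "n' > 0" "M' \<le> M"
  shows "grid n M \<subseteq> grid (n * n') M'"
proof
  fix q assume "q \<in> grid n M"
  then obtain k :: int where q: "M \<le> q" "q = of_int k / of_nat n" by (auto simp: grid_def)
  have "q = of_int (k * int n') / of_nat (n * n')" using q(2) assms(1) by simp
  moreover have "M' \<le> q" using q(1) assms(2) by simp
  ultimately show "q \<in> grid (n * n') M'" unfolding grid_def by blast
qed

lemma grid_add:
  assumes "p \<in> grid n M" "q \<in> grid n M'"
  shows "p + q \<in> grid n (M + M')"
proof -
  obtain k l :: int where "M \<le> p" "p = of_int k / of_nat n" "M' \<le> q" "q = of_int l / of_nat n"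
    using assms by (auto simp: grid_def)
  then have "M + M' \<le> p + q" "p + q = of_int (k + l) / of_nat n"
    by (simp_all add: add_divide_distrib)
  then show ?thesis unfolding grid_def by blast
qed

lemma puiseux_common_grid:
  assumes "finite F" "F \<subseteq> puiseux"
  shows "\<exists>n>0. \<exists>M. \<forall>f\<in>F. {q. f q \<noteq> 0} \<subseteq> grid n M"
  using assms
proof (induction F rule: finite_induct)
  case empty
  show ?case by (intro exI[of _ "1::nat"]) auto
next
  case (insert f F)
  then obtain n M where n: "n > 0" and F: "\<forall>g\<in>F. {q. g q \<noteq> 0} \<subseteq> grid n M"
    by auto
  from insert obtain n' M' where n': "n' > 0" and f: "{q. f q \<noteq> 0} \<subseteq> grid n' M'"
    by (auto simp: puiseux_iff_grid)
  have "grid n M \<subseteq> grid (n * n') (min M M')" "grid n' M' \<subseteq> grid (n * n') (min M M')"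
    using grid_subset_grid_mult[of n' "min M M'" M n] grid_subset_grid_mult[of n "min M M'" M' n']
      n n'
    by (simp_all add: mult.commute)
  with F f have "\<forall>g\<in>insert f F. {q. g q \<noteq> 0} \<subseteq> grid (n * n') (min M M')" by blast
  moreover have "n * n' > 0" using n n' by simp
  ultimately show ?case by blast
qed

lemma puiseux_pair_common_grid:
  assumes "f \<in> puiseux" "g \<in> puiseux"
  obtains n M where "n > 0" "{q. f q \<noteq> 0} \<subseteq> grid n M" "{q. g q \<noteq> 0} \<subseteq> grid n M"
  using puiseux_common_grid[of "{f, g}"] assms by auto

lemma puiseux_add:
  assumes "a \<in> puiseux" "b \<in> puiseux"
  shows "(\<lambda>q. a q + b q) \<in> puiseux"
proof -
  obtain n M where "n > 0" "{q. a q \<noteq> 0} \<subseteq> grid n M" "{q. b q \<noteq> 0} \<subseteq> grid n M"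
    using puiseux_pair_common_grid[OF assms] .
  moreover have "{q. a q + b q \<noteq> 0} \<subseteq> {q. a q \<noteq> 0} \<union> {q. b q \<noteq> 0}" by auto
  ultimately show ?thesis unfolding puiseux_iff_grid by blast
qed

lemma puiseux_smult: "a \<in> puiseux \<Longrightarrow> (\<lambda>q. c * a q) \<in> puiseux"
  unfolding puiseux_def by auto

lemma puiseux_zero: "(\<lambda>q. 0) \<in> puiseux"
  by (auto simp: puiseux_iff_grid)

lemma puiseux_lincomb:
  "finite B \<Longrightarrow> B \<subseteq> puiseux \<Longrightarrow> (\<lambda>q. \<Sum>a\<in>B. c a * a q) \<in> puiseux"
proof (induction B rule: finite_induct)
  case empty
  show ?case by (simp add: puiseux_zero)
next
  case (insert b B)
  then show ?case by (simp add: puiseux_add puiseux_smult)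
qed

lemma finite_pmult_support:
  assumes "f \<in> puiseux" "g \<in> puiseux"
  shows "finite {a. f a \<noteq> 0 \<and> g (q - a) \<noteq> 0}"
proof -
  obtain n M where n: "n > 0" and f: "{q. f q \<noteq> 0} \<subseteq> grid n M" and g: "{q. g q \<noteq> 0} \<subseteq> grid n M"
    using puiseux_pair_common_grid[OF assms] .
  have "{a. f a \<noteq> 0 \<and> g (q - a) \<noteq> 0} \<subseteq> grid n M \<inter> {..q - M}"
  proof
    fix a assume "a \<in> {a. f a \<noteq> 0 \<and> g (q - a) \<noteq> 0}"
    then have "a \<in> grid n M" "q - a \<in> grid n M" using f g by auto
    then show "a \<in> grid n M \<inter> {..q - M}" by (auto simp: grid_def)
  qed
  then show ?thesis using finite_grid_atMost[OF n] by (rule finite_subset)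
qed

lemma puiseux_pmult:
  assumes "f \<in> puiseux" "g \<in> puiseux"
  shows "pmult f g \<in> puiseux"
proof -
  obtain n M where n: "n > 0" and f: "{q. f q \<noteq> 0} \<subseteq> grid n M" and g: "{q. g q \<noteq> 0} \<subseteq> grid n M"
    using puiseux_pair_common_grid[OF assms] .
  have "{q. pmult f g q \<noteq> 0} \<subseteq> grid n (M + M)"
  proof
    fix q assume "q \<in> {q. pmult f g q \<noteq> 0}"
    then obtain a where "f a \<noteq> 0" "g (q - a) \<noteq> 0"
      unfolding pmult_def by (auto elim: sum.not_neutral_contains_not_neutral)
    then have "a + (q - a) \<in> grid n (M + M)" using f g by (intro grid_add) auto
    then show "q \<in> grid n (M + M)" by simp
  qed
  with n show ?thesis unfolding puiseux_iff_grid by blast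
qed

lemma grid_has_least:
  assumes "n > 0" "T \<noteq> {}" "T \<subseteq> grid n M"
  shows "\<exists>w\<in>T. \<forall>w'\<in>T. w \<le> w'"
proof -
  obtain q0 where q0: "q0 \<in> T" using assms(2) by auto
  let ?T0 = "T \<inter> {..q0}"
  have "?T0 \<subseteq> grid n M \<inter> {..q0}" using assms(3) by blast
  then have fin: "finite ?T0" using finite_grid_atMost[OF assms(1)] by (rule finite_subset)
  have ne: "?T0 \<noteq> {}" using q0 by auto
  have "Min ?T0 \<le> w'" if "w' \<in> T" for w'
  proof (cases "w' \<le> q0")
    case True
    with that fin show ?thesis by (intro Min_le) auto
  next
    case False
    have "Min ?T0 \<le> q0" using Min_in[OF fin ne] by simp
    with False show ?thesis by simp
  qed
  moreover have "Min ?T0 \<in> T" using Min_in[OF fin ne] by simp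
  ultimately show ?thesis by blast
qed

lemma lex_has_least:
  assumes "n > 0"
  shows "S \<noteq> {} \<Longrightarrow> S \<subseteq> {e. length e = m \<and> set e \<subseteq> grid n M} \<Longrightarrow> \<exists>e\<in>S. \<forall>e'\<in>S. e \<le> e'"
proof (induction m arbitrary: S)
  case 0
  then show ?case by auto
next
  case (Suc m)
  have S: "length e = Suc m \<and> set e \<subseteq> grid n M" if "e \<in> S" for e
    using Suc.prems(2) that by blast
  have "hd ` S \<noteq> {}" using Suc.prems(1) by simp
  moreover have "hd ` S \<subseteq> grid n M"
  proof
    fix h assume "h \<in> hd ` S"
    then obtain e where e: "e \<in> S" "h = hd e" by blast
    with S[OF e(1)] show "h \<in> grid n M" by (cases e) auto
  qed
  ultimately obtain h where h: "h \<in> hd ` S" "\<forall>h'\<in>hd ` S. h \<le> h'"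
    using grid_has_least[OF assms] by meson
  let ?T = "{t. h # t \<in> S}"
  have "?T \<noteq> {}"
  proof -
    obtain e where e: "e \<in> S" "h = hd e" using h(1) by blast
    with S[OF e(1)] show ?thesis by (cases e) auto
  qed
  moreover have "?T \<subseteq> {e. length e = m \<and> set e \<subseteq> grid n M}" using S by (fastforce simp: subset_iff)
  ultimately obtain t where t: "t \<in> ?T" "\<forall>t'\<in>?T. t \<le> t'"
    using Suc.IH by meson
  have "h # t \<le> e'" if e'S: "e' \<in> S" for e'
  proof -
    obtain h' t' where e': "e' = h' # t'" using S[OF e'S] by (cases e') auto
    then have "h' \<in> hd ` S" using e'S by force
    then have "h \<le> h'" using h(2) by blast
    then show ?thesis using t e' e'S by (cases "h = h'") auto
  qed
  then show ?case using t(1) by blast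
qed

lemma map2_diff_less_map2_diff_right:
  fixes p q c :: "'a::ordered_ab_group_add list"
  shows "length p = length c \<Longrightarrow> length q = length c \<Longrightarrow> p < q \<Longrightarrow> map2 (-) p c < map2 (-) q c"
proof (induction c arbitrary: p q)
  case (Cons a c)
  then show ?case by (cases p; cases q) auto
qed simp

lemma map2_diff_less_map2_diff_left:
  fixes p q c :: "'a::ordered_ab_group_add list"
  shows "length p = length c \<Longrightarrow> length q = length c \<Longrightarrow> p < q \<Longrightarrow> map2 (-) c q < map2 (-) c p"
proof (induction c arbitrary: p q)
  case (Cons a c)
  then show ?case by (cases p; cases q) auto
qed simp

lemma map2_add_diff_cancel_left:
  fixes a b :: "'a::ab_group_add list"
  shows "length a = length b \<Longrightarrow> map2 (-) (map2 (+) a b) a = b"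
proof (induction a arbitrary: b)
  case (Cons x a)
  then show ?case by (cases b) auto
qed simp

section \<open>Coefficients of tensors\<close>

text \<open>\<open>simple_coeff us e\<close> is only meaningful for lists of equal length: surplus entries of
  either list are ignored.\<close>

fun simple_coeff :: "(rat \<Rightarrow> real) list \<Rightarrow> rat list \<Rightarrow> real" where
  "simple_coeff (f # fs) (q # qs) = f q * simple_coeff fs qs"
| "simple_coeff _ _ = 1"

definition supp :: "('a \<Rightarrow> real) \<Rightarrow> 'a set" where
  "supp x = {t. x t \<noteq> 0}"

definition tensor_coeff :: "((rat \<Rightarrow> real) list \<Rightarrow> real) \<Rightarrow> rat list \<Rightarrow> real" where
  "tensor_coeff x e = (\<Sum>t\<in>supp x. x t * simple_coeff t e)"

lemma free_tensors_iff:
  "x \<in> free_tensors m \<longleftrightarrow> finite (supp x) \<and> (\<forall>t\<in>supp x. length t = m \<and> set t \<subseteq> puiseux)"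
  by (auto simp: free_tensors_def supp_def)

lemma free_tensors_add:
  assumes "x \<in> free_tensors m" "y \<in> free_tensors m"
  shows "(\<lambda>s. x s + y s) \<in> free_tensors m"
proof -
  have "supp (\<lambda>s. x s + y s) \<subseteq> supp x \<union> supp y" by (auto simp: supp_def)
  with assms show ?thesis
    unfolding free_tensors_iff by (meson Un_iff finite_UnI finite_subset subsetD)
qed

lemma free_tensors_scale: "x \<in> free_tensors m \<Longrightarrow> (\<lambda>s. c * x s) \<in> free_tensors m"
  by (auto simp: free_tensors_def)

lemma free_tensors_diff:
  "x \<in> free_tensors m \<Longrightarrow> y \<in> free_tensors m \<Longrightarrow> (\<lambda>s. x s - y s) \<in> free_tensors m"
  using free_tensors_add[OF _ free_tensors_scale[of y m "-1"], of x] by simp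

lemma free_tensors_zero: "(\<lambda>s. 0) \<in> free_tensors m"
  by (simp add: free_tensors_def)

lemma supp_simple_tensor: "supp (simple_tensor t) = {t}"
  by (auto simp: supp_def simple_tensor_def)

lemma free_tensors_simple_tensor:
  "length t = m \<Longrightarrow> set t \<subseteq> puiseux \<Longrightarrow> simple_tensor t \<in> free_tensors m"
  by (simp add: free_tensors_iff supp_simple_tensor)

lemma free_tensors_sum:
  "finite I \<Longrightarrow> (\<And>i. i \<in> I \<Longrightarrow> f i \<in> free_tensors m) \<Longrightarrow> (\<lambda>s. \<Sum>i\<in>I. f i s) \<in> free_tensors m"
  by (induction I rule: finite_induct) (simp_all add: free_tensors_zero free_tensors_add)

lemma tensor_coeff_eq_sum:
  "finite K \<Longrightarrow> supp x \<subseteq> K \<Longrightarrow> tensor_coeff x e = (\<Sum>t\<in>K. x t * simple_coeff t e)"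
  unfolding tensor_coeff_def by (rule sum.mono_neutral_left) (auto simp: supp_def)

lemma tensor_coeff_add:
  assumes "x \<in> free_tensors m" "y \<in> free_tensors m"
  shows "tensor_coeff (\<lambda>s. x s + y s) e = tensor_coeff x e + tensor_coeff y e"
proof -
  let ?K = "supp x \<union> supp y"
  have K: "finite ?K" using assms by (simp add: free_tensors_iff)
  have "tensor_coeff (\<lambda>s. x s + y s) e = (\<Sum>t\<in>?K. (x t + y t) * simple_coeff t e)"
    by (rule tensor_coeff_eq_sum[OF K]) (auto simp: supp_def)
  also have "\<dots> = (\<Sum>t\<in>?K. x t * simple_coeff t e) + (\<Sum>t\<in>?K. y t * simple_coeff t e)"
    by (simp add: distrib_right sum.distrib)
  also have "\<dots> = tensor_coeff x e + tensor_coeff y e"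
    using tensor_coeff_eq_sum[OF K] by simp
  finally show ?thesis .
qed

lemma tensor_coeff_scale: "tensor_coeff (\<lambda>s. c * x s) e = c * tensor_coeff x e"
proof (cases "c = 0")
  case False
  then have "supp (\<lambda>s. c * x s) = supp x" by (auto simp: supp_def)
  then show ?thesis by (simp add: tensor_coeff_def sum_distrib_left mult.assoc)
qed (simp add: tensor_coeff_def supp_def)

lemma tensor_coeff_diff:
  assumes "x \<in> free_tensors m" "y \<in> free_tensors m"
  shows "tensor_coeff (\<lambda>s. x s - y s) e = tensor_coeff x e - tensor_coeff y e"
proof -
  have "tensor_coeff (\<lambda>s. x s + -1 * y s) e = tensor_coeff x e + tensor_coeff (\<lambda>s. -1 * y s) e"
    by (rule tensor_coeff_add[OF assms(1) free_tensors_scale[OF assms(2)]])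
  then show ?thesis by (simp only: tensor_coeff_scale) simp
qed

lemma tensor_coeff_sum:
  "finite I \<Longrightarrow> (\<And>i. i \<in> I \<Longrightarrow> f i \<in> free_tensors m) \<Longrightarrow>
    tensor_coeff (\<lambda>s. \<Sum>i\<in>I. f i s) e = (\<Sum>i\<in>I. tensor_coeff (f i) e)"
proof (induction I rule: finite_induct)
  case empty
  then show ?case by (simp add: tensor_coeff_def supp_def)
next
  case (insert a I)
  then show ?case
    by (simp add: tensor_coeff_add[OF _ free_tensors_sum[of I f m], of "f a" e])
qed

lemma tensor_coeff_simple_tensor: "tensor_coeff (simple_tensor t) = simple_coeff t"
proof
  fix e
  show "tensor_coeff (simple_tensor t) e = simple_coeff t e"
    unfolding tensor_coeff_def supp_simple_tensor by (simp add: simple_tensor_def)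
qed

lemma simple_coeff_update_add:
  "length us = length e \<Longrightarrow> i < length us \<Longrightarrow>
    simple_coeff (us[i := (\<lambda>q. a q + b q)]) e =
      simple_coeff (us[i := a]) e + simple_coeff (us[i := b]) e"
proof (induction us arbitrary: i e)
  case (Cons f us)
  then show ?case by (cases e; cases i) (auto simp: algebra_simps)
qed simp

lemma simple_coeff_update_smult:
  "length us = length e \<Longrightarrow> i < length us \<Longrightarrow>
    simple_coeff (us[i := (\<lambda>q. c * a q)]) e = c * simple_coeff (us[i := a]) e"
proof (induction us arbitrary: i e)
  case (Cons f us)
  then show ?case by (cases e; cases i) (auto simp: algebra_simps)
qed simp

lemma set_update_puiseux: "set us \<subseteq> puiseux \<Longrightarrow> a \<in> puiseux \<Longrightarrow> set (us[i := a]) \<subseteq> puiseux"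
  using set_update_subset_insert[of us i a] by blast

lemma tensor_relations_free: "x \<in> tensor_relations m \<Longrightarrow> x \<in> free_tensors m"
proof (induction rule: tensor_relations.induct)
  case (add_rel us i a b)
  then show ?case
    by (intro free_tensors_diff free_tensors_simple_tensor set_update_puiseux puiseux_add) auto
next
  case (smult_rel us i a c)
  then show ?case
    by (intro free_tensors_diff free_tensors_scale free_tensors_simple_tensor set_update_puiseux
        puiseux_smult) auto
qed (simp_all add: free_tensors_zero free_tensors_add free_tensors_scale)

lemma tensor_coeff_relation:
  "x \<in> tensor_relations m \<Longrightarrow> length e = m \<Longrightarrow> tensor_coeff x e = 0"
proof (induction rule: tensor_relations.induct)
  case zero
  then show ?case by (simp add: tensor_coeff_def supp_def)
next
  case (add_rel us i a b)
  have free: "simple_tensor (us[i := f]) \<in> free_tensors m" if "f \<in> puiseux" for f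
    using add_rel that by (intro free_tensors_simple_tensor set_update_puiseux) auto
  have "a \<in> puiseux" "b \<in> puiseux" "(\<lambda>q. a q + b q) \<in> puiseux"
    using add_rel by (auto intro: puiseux_add)
  with free add_rel show ?case
    by (simp add: tensor_coeff_diff[of _ m] free_tensors_diff tensor_coeff_simple_tensor
        simple_coeff_update_add)
next
  case (smult_rel us i a c)
  have free: "simple_tensor (us[i := f]) \<in> free_tensors m" if "f \<in> puiseux" for f
    using smult_rel that by (intro free_tensors_simple_tensor set_update_puiseux) auto
  have "a \<in> puiseux" "(\<lambda>q. c * a q) \<in> puiseux"
    using smult_rel by (auto intro: puiseux_smult)
  with free smult_rel show ?case
    by (simp add: tensor_coeff_diff[of _ m] free_tensors_scale tensor_coeff_scale
        tensor_coeff_simple_tensor simple_coeff_update_smult)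
next
  case (add x y)
  then show ?case by (simp add: tensor_coeff_add[of _ m] tensor_relations_free)
next
  case (scale x c)
  then show ?case by (simp add: tensor_coeff_scale)
qed

lemma tensor_coeff_eq_if_diff_relation:
  assumes "x \<in> free_tensors m" "y \<in> free_tensors m" "(\<lambda>s. x s - y s) \<in> tensor_relations m"
    and "length e = m"
  shows "tensor_coeff y e = tensor_coeff x e"
  using tensor_coeff_relation[OF assms(3,4)] tensor_coeff_diff[OF assms(1,2), of e] by simp

section \<open>The kernel of the coefficient map\<close>

text \<open>\<open>cons_tensor a y\<close> represents \<open>a \<otimes> y\<close>.\<close>

definition cons_tensor ::
  "(rat \<Rightarrow> real) \<Rightarrow> ((rat \<Rightarrow> real) list \<Rightarrow> real) \<Rightarrow> (rat \<Rightarrow> real) list \<Rightarrow> real" where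
  "cons_tensor a y s = (case s of [] \<Rightarrow> 0 | b # s' \<Rightarrow> if b = a then y s' else 0)"

lemma cons_tensor_Nil [simp]: "cons_tensor a y [] = 0"
  and cons_tensor_Cons [simp]: "cons_tensor a y (b # s) = (if b = a then y s else 0)"
  by (simp_all add: cons_tensor_def)

lemma cons_tensor_add: "cons_tensor a (\<lambda>s. x s + y s) = (\<lambda>s. cons_tensor a x s + cons_tensor a y s)"
  and cons_tensor_diff:
    "cons_tensor a (\<lambda>s. x s - y s) = (\<lambda>s. cons_tensor a x s - cons_tensor a y s)"
  and cons_tensor_scale: "cons_tensor a (\<lambda>s. c * x s) = (\<lambda>s. c * cons_tensor a x s)"
  and cons_tensor_zero: "cons_tensor a (\<lambda>s. 0) = (\<lambda>s. 0)"
  and cons_tensor_simple_tensor: "cons_tensor a (simple_tensor t) = simple_tensor (a # t)"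
  by (auto simp: cons_tensor_def simple_tensor_def fun_eq_iff split: list.split)

lemma tensor_relations_sum:
  "finite I \<Longrightarrow> (\<And>i. i \<in> I \<Longrightarrow> f i \<in> tensor_relations m) \<Longrightarrow> (\<lambda>s. \<Sum>i\<in>I. f i s) \<in> tensor_relations m"
  by (induction I rule: finite_induct) (auto intro: tensor_relations.intros)

lemma tensor_relations_cons_tensor:
  "y \<in> tensor_relations m \<Longrightarrow> a \<in> puiseux \<Longrightarrow> cons_tensor a y \<in> tensor_relations (Suc m)"
proof (induction rule: tensor_relations.induct)
  case (add_rel us i a' b')
  then show ?case
    using tensor_relations.add_rel[of "a # us" "Suc m" "Suc i" a' b']
    by (simp add: cons_tensor_diff cons_tensor_simple_tensor)
next
  case (smult_rel us i a' c)
  then show ?case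
    using tensor_relations.smult_rel[of "a # us" "Suc m" "Suc i" a' c]
    by (simp add: cons_tensor_diff cons_tensor_scale cons_tensor_simple_tensor)
qed (auto simp: cons_tensor_zero cons_tensor_add cons_tensor_scale intro: tensor_relations.intros)

lemma cons_tensor_eq_sum:
  assumes "y \<in> free_tensors m"
  shows "cons_tensor a y = (\<lambda>s. \<Sum>t\<in>supp y. y t * simple_tensor (a # t) s)"
proof
  fix s
  show "cons_tensor a y s = (\<Sum>t\<in>supp y. y t * simple_tensor (a # t) s)"
  proof (cases s)
    case (Cons b s')
    have "(\<Sum>t\<in>supp y. y t * simple_tensor (a # t) s) =
        (\<Sum>t\<in>supp y. if t = s' then (if b = a then y t else 0) else 0)"
      using Cons by (intro sum.cong) (auto simp: simple_tensor_def)
    also have "\<dots> = cons_tensor a y s"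
      using assms Cons by (simp add: free_tensors_iff) (auto simp: supp_def)
    finally show ?thesis by simp
  qed (simp add: simple_tensor_def)
qed

lemma cons_tensor_add_left:
  assumes "y \<in> free_tensors m" "a \<in> puiseux" "b \<in> puiseux"
  shows "(\<lambda>s. cons_tensor (\<lambda>q. a q + b q) y s - cons_tensor a y s - cons_tensor b y s)
    \<in> tensor_relations (Suc m)"
proof -
  have "(\<lambda>s. cons_tensor (\<lambda>q. a q + b q) y s - cons_tensor a y s - cons_tensor b y s) =
    (\<lambda>s. \<Sum>t\<in>supp y. y t * (simple_tensor ((\<lambda>q. a q + b q) # t) s - simple_tensor (a # t) s
      - simple_tensor (b # t) s))"
    by (simp add: cons_tensor_eq_sum[OF assms(1)] sum_subtractf right_diff_distrib)
  also have "\<dots> \<in> tensor_relations (Suc m)"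
    using assms tensor_relations.add_rel[of "_ # t" "Suc m" 0 a b for t]
    by (intro tensor_relations_sum tensor_relations.scale) (auto simp: free_tensors_iff)
  finally show ?thesis .
qed

lemma cons_tensor_smult_left:
  assumes "y \<in> free_tensors m" "a \<in> puiseux"
  shows "(\<lambda>s. cons_tensor (\<lambda>q. c * a q) y s - c * cons_tensor a y s) \<in> tensor_relations (Suc m)"
proof -
  have "(\<lambda>s. cons_tensor (\<lambda>q. c * a q) y s - c * cons_tensor a y s) =
    (\<lambda>s. \<Sum>t\<in>supp y. y t * (simple_tensor ((\<lambda>q. c * a q) # t) s - c * simple_tensor (a # t) s))"
    by (simp add: cons_tensor_eq_sum[OF assms(1)] sum_subtractf right_diff_distrib sum_distrib_left
        algebra_simps)
  also have "\<dots> \<in> tensor_relations (Suc m)"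
    using assms tensor_relations.smult_rel[of "_ # t" "Suc m" 0 a c for t]
    by (intro tensor_relations_sum tensor_relations.scale) (auto simp: free_tensors_iff)
  finally show ?thesis .
qed

lemma cons_tensor_lincomb_left:
  assumes y: "y \<in> free_tensors m"
  shows "finite B \<Longrightarrow> B \<subseteq> puiseux \<Longrightarrow>
    (\<lambda>s. cons_tensor (\<lambda>q. \<Sum>a\<in>B. c a * a q) y s - (\<Sum>a\<in>B. c a * cons_tensor a y s))
      \<in> tensor_relations (Suc m)"
proof (induction B rule: finite_induct)
  case empty
  show ?case using cons_tensor_smult_left[OF y puiseux_zero, of 0] by simp
next
  case (insert b B)
  let ?S = "\<lambda>q. \<Sum>a\<in>B. c a * a q"
  have "?S \<in> puiseux" "b \<in> puiseux" using insert by (auto intro: puiseux_lincomb)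
  then have "(\<lambda>s. (cons_tensor (\<lambda>q. c b * b q + ?S q) y s - cons_tensor (\<lambda>q. c b * b q) y s
      - cons_tensor ?S y s) + (cons_tensor (\<lambda>q. c b * b q) y s - c b * cons_tensor b y s)
      + (cons_tensor ?S y s - (\<Sum>a\<in>B. c a * cons_tensor a y s))) \<in> tensor_relations (Suc m)"
    using insert
    by (intro tensor_relations.add cons_tensor_add_left cons_tensor_smult_left y puiseux_smult)
      auto
  then show ?case using insert by (simp add: algebra_simps)
qed

lemma free_tensors_slice:
  assumes x: "x \<in> free_tensors (Suc m)"
  shows "(\<lambda>s. x (a # s)) \<in> free_tensors m"
  unfolding free_tensors_iff
proof
  have "supp (\<lambda>s. x (a # s)) = Cons a -` supp x" by (auto simp: supp_def)
  with x show "finite (supp (\<lambda>s. x (a # s)))" by (simp add: free_tensors_iff finite_vimageI)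
  show "\<forall>t\<in>supp (\<lambda>s. x (a # s)). length t = m \<and> set t \<subseteq> puiseux"
  proof
    fix t assume "t \<in> supp (\<lambda>s. x (a # s))"
    then have "a # t \<in> supp x" by (simp add: supp_def)
    with x have "length (a # t) = Suc m \<and> set (a # t) \<subseteq> puiseux" unfolding free_tensors_iff by blast
    then show "length t = m \<and> set t \<subseteq> puiseux" by simp
  qed
qed

lemma supp_cons_tensor: "supp (cons_tensor a y) = Cons a ` supp y"
proof (rule set_eqI)
  fix s
  show "s \<in> supp (cons_tensor a y) \<longleftrightarrow> s \<in> Cons a ` supp y"
    by (cases s) (auto simp: supp_def)
qed

lemma free_tensors_cons_tensor:
  "a \<in> puiseux \<Longrightarrow> y \<in> free_tensors m \<Longrightarrow> cons_tensor a y \<in> free_tensors (Suc m)"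
  unfolding free_tensors_iff supp_cons_tensor by auto

lemma tensor_coeff_cons_tensor: "tensor_coeff (cons_tensor a y) (q # e) = a q * tensor_coeff y e"
proof -
  have "tensor_coeff (cons_tensor a y) (q # e) =
      (\<Sum>t\<in>supp y. cons_tensor a y (a # t) * simple_coeff (a # t) (q # e))"
    unfolding tensor_coeff_def supp_cons_tensor by (subst sum.reindex) (auto simp: inj_on_def)
  also have "\<dots> = a q * tensor_coeff y e"
    by (simp add: tensor_coeff_def sum_distrib_left algebra_simps)
  finally show ?thesis .
qed

lemma free_tensor_decompose:
  assumes "x \<in> free_tensors (Suc m)" "finite A" "\<forall>t\<in>supp x. hd t \<in> A"
  shows "x = (\<lambda>s. \<Sum>a\<in>A. cons_tensor a (\<lambda>s'. x (a # s')) s)"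
proof
  fix s
  show "x s = (\<Sum>a\<in>A. cons_tensor a (\<lambda>s'. x (a # s')) s)"
  proof (cases s)
    case Nil
    then show ?thesis using assms(1) by (auto simp: free_tensors_def)
  next
    case (Cons b s')
    have "(\<Sum>a\<in>A. cons_tensor a (\<lambda>s'. x (a # s')) s) = (\<Sum>a\<in>A. if b = a then x (a # s') else 0)"
      using Cons by (intro sum.cong) auto
    also have "\<dots> = (if b \<in> A then x s else 0)"
      using Cons assms(2) by (simp only: sum.delta')
    also have "\<dots> = x s" using assms(3) Cons by (auto simp: supp_def)
    finally show ?thesis by simp
  qed
qed

lemma tensor_coeff_Cons_decompose:
  assumes "x \<in> free_tensors (Suc m)" "finite A" "A \<subseteq> puiseux" "\<forall>t\<in>supp x. hd t \<in> A"
  shows "tensor_coeff x (q # e) = (\<Sum>a\<in>A. a q * tensor_coeff (\<lambda>s. x (a # s)) e)"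
proof -
  have "tensor_coeff x (q # e) = tensor_coeff (\<lambda>s. \<Sum>a\<in>A. cons_tensor a (\<lambda>s'. x (a # s')) s) (q # e)"
    using free_tensor_decompose[OF assms(1,2,4)] by simp
  also have "\<dots> = (\<Sum>a\<in>A. tensor_coeff (cons_tensor a (\<lambda>s'. x (a # s'))) (q # e))"
    using assms
    by (intro tensor_coeff_sum[of _ _ "Suc m"] free_tensors_cons_tensor free_tensors_slice) auto
  also have "\<dots> = (\<Sum>a\<in>A. a q * tensor_coeff (\<lambda>s. x (a # s)) e)"
    by (simp add: tensor_coeff_cons_tensor)
  finally show ?thesis .
qed

lemma dependent_eq_lincomb:
  fixes c :: "('a \<Rightarrow> 'b::field) \<Rightarrow> 'b"
  assumes "finite A" "\<forall>q. (\<Sum>a\<in>A. c a * a q) = 0" "a0 \<in> A" "c a0 \<noteq> 0"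
  shows "a0 = (\<lambda>q. \<Sum>a\<in>A - {a0}. (- c a / c a0) * a q)"
proof
  fix q
  have "(\<Sum>a\<in>A. c a * a q) = c a0 * a0 q + (\<Sum>a\<in>A - {a0}. c a * a q)"
    using assms(1,3) by (rule sum.remove)
  with assms(2) have "c a0 * a0 q = - (\<Sum>a\<in>A - {a0}. c a * a q)"
    by (simp add: eq_neg_iff_add_eq_0)
  also have "\<dots> = c a0 * (\<Sum>a\<in>A - {a0}. (- c a / c a0) * a q)"
    using assms(4) by (simp add: sum_distrib_left sum_negf[symmetric])
  finally show "a0 q = (\<Sum>a\<in>A - {a0}. (- c a / c a0) * a q)" using assms(4) by simp
qed

lemma eliminate_dependent_head:
  assumes x: "x \<in> free_tensors (Suc m)" and A: "finite A" "A \<subseteq> puiseux"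
    and heads: "\<forall>t\<in>supp x. hd t \<in> A"
    and dependent: "\<forall>q. (\<Sum>a\<in>A. c a * a q) = 0" "a0 \<in> A" "c a0 \<noteq> 0"
  obtains x' where "x' \<in> free_tensors (Suc m)" "(\<lambda>s. x s - x' s) \<in> tensor_relations (Suc m)"
    "\<forall>t\<in>supp x'. hd t \<in> A - {a0}"
proof
  define B where "B = A - {a0}"
  define d where "d a = - c a / c a0" for a
  have B: "finite B" "B \<subseteq> puiseux" using A by (auto simp: B_def)
  have a0: "a0 = (\<lambda>q. \<Sum>a\<in>B. d a * a q)"
    unfolding B_def d_def by (rule dependent_eq_lincomb[OF A(1) dependent])
  define y where "y = (\<lambda>s. x (a0 # s))"
  define x' where "x' = (\<lambda>s. x s - cons_tensor a0 y s + (\<Sum>a\<in>B. d a * cons_tensor a y s))"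
  have y: "y \<in> free_tensors m" unfolding y_def using x by (rule free_tensors_slice)
  have "a0 \<in> puiseux" using A dependent(2) by blast
  with x y B show "x' \<in> free_tensors (Suc m)" unfolding x'_def
    by (intro free_tensors_add free_tensors_diff free_tensors_sum free_tensors_scale
        free_tensors_cons_tensor) auto
  show "(\<lambda>s. x s - x' s) \<in> tensor_relations (Suc m)"
    using cons_tensor_lincomb_left[OF y B, of d] unfolding a0[symmetric] by (simp add: x'_def)
  show "\<forall>t\<in>supp x'. hd t \<in> A - {a0}"
    unfolding B_def[symmetric]
  proof (rule ccontr)
    assume "\<not> (\<forall>t\<in>supp x'. hd t \<in> B)"
    then obtain t where "t \<in> supp x'" "hd t \<notin> B" by blast
    moreover have "x' [] = 0" using x by (auto simp: x'_def free_tensors_def)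
    ultimately obtain b s where t: "b # s \<in> supp x'" "b \<notin> B" by (cases t) (auto simp: supp_def)
    have "x (b # s) = 0" if "b \<noteq> a0" using heads that t(2) by (auto simp: supp_def B_def)
    moreover have "(\<Sum>a\<in>B. d a * cons_tensor a y (b # s)) = 0" using t(2) by (intro sum.neutral) auto
    ultimately have "x' (b # s) = 0" by (auto simp: x'_def y_def)
    then show False using t(1) by (simp add: supp_def)
  qed
qed

lemma relations_if_slices_relations:
  assumes "x \<in> free_tensors (Suc m)" "finite A" "A \<subseteq> puiseux" "\<forall>t\<in>supp x. hd t \<in> A"
    and "\<And>a. a \<in> A \<Longrightarrow> (\<lambda>s. x (a # s)) \<in> tensor_relations m"
  shows "x \<in> tensor_relations (Suc m)"
proof -
  have "(\<lambda>s. \<Sum>a\<in>A. cons_tensor a (\<lambda>s'. x (a # s')) s) \<in> tensor_relations (Suc m)"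
    using assms by (intro tensor_relations_sum tensor_relations_cons_tensor) auto
  then show ?thesis using free_tensor_decompose[OF assms(1,2,4)] by simp
qed

lemma relations_if_tensor_coeff_vanishes_Suc:
  assumes IH: "\<And>y. y \<in> free_tensors m \<Longrightarrow> \<forall>e. length e = m \<longrightarrow> tensor_coeff y e = 0 \<Longrightarrow>
      y \<in> tensor_relations m"
  shows "finite A \<Longrightarrow> A \<subseteq> puiseux \<Longrightarrow> x \<in> free_tensors (Suc m) \<Longrightarrow> \<forall>t\<in>supp x. hd t \<in> A \<Longrightarrow>
    \<forall>e. length e = Suc m \<longrightarrow> tensor_coeff x e = 0 \<Longrightarrow> x \<in> tensor_relations (Suc m)"
proof (induction A arbitrary: x rule: finite_psubset_induct)
  case (psubset A)
  have coeff: "(\<Sum>a\<in>A. tensor_coeff (\<lambda>s. x (a # s)) e * a q) = 0" if "length e = m" for e q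
    using tensor_coeff_Cons_decompose[OF psubset.prems(2) psubset.hyps(1) psubset.prems(1,3),
        of q e] psubset.prems(4) that
    by (simp add: mult.commute)
  show ?case
  proof (cases "\<forall>c. (\<forall>q. (\<Sum>a\<in>A. c a * a q) = 0) \<longrightarrow> (\<forall>a\<in>A. c a = 0)")
    case True
    \<comment> \<open>The first factors are linearly independent, so every slice has vanishing coefficients.\<close>
    show ?thesis
      using psubset.prems(2) psubset.hyps(1) psubset.prems(1,3)
    proof (rule relations_if_slices_relations)
      fix a assume "a \<in> A"
      have "tensor_coeff (\<lambda>s. x (a # s)) e = 0" if "length e = m" for e
        using spec[OF True, of "\<lambda>a. tensor_coeff (\<lambda>s. x (a # s)) e"] coeff[OF that] \<open>a \<in> A\<close> by blast
      then show "(\<lambda>s. x (a # s)) \<in> tensor_relations m"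
        using psubset.prems(2) by (intro IH free_tensors_slice) blast+
    qed
  next
    case False
    \<comment> \<open>Some first factor \<open>a0\<close> is a combination of the others; rewriting it away shrinks \<open>A\<close>.\<close>
    then obtain c a0 where c: "\<forall>q. (\<Sum>a\<in>A. c a * a q) = 0" and a0: "a0 \<in> A" "c a0 \<noteq> 0"
      by blast
    obtain x' where x': "x' \<in> free_tensors (Suc m)"
      "(\<lambda>s. x s - x' s) \<in> tensor_relations (Suc m)" "\<forall>t\<in>supp x'. hd t \<in> A - {a0}"
      using eliminate_dependent_head[OF psubset.prems(2) psubset.hyps(1) psubset.prems(1,3) c a0] .
    have B: "A - {a0} \<subset> A" "A - {a0} \<subseteq> puiseux" using a0(1) psubset.prems(1) by auto
    have "tensor_coeff x' e = 0" if "length e = Suc m" for e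
      using tensor_coeff_eq_if_diff_relation[OF psubset.prems(2) x'(1,2) that] psubset.prems(4) that
      by simp
    then have "x' \<in> tensor_relations (Suc m)" using psubset.IH[OF B x'(1) x'(3)] by blast
    from tensor_relations.add[OF this x'(2)] show ?thesis by simp
  qed
qed

lemma tensor_relations_iff_coeff_vanishes:
  "x \<in> free_tensors m \<Longrightarrow> x \<in> tensor_relations m \<longleftrightarrow> (\<forall>e. length e = m \<longrightarrow> tensor_coeff x e = 0)"
proof (induction m arbitrary: x)
  case 0
  have "x = (\<lambda>_. 0)" if "tensor_coeff x [] = 0"
  proof
    fix s
    have "supp x \<subseteq> {[]}" using "0.prems" by (auto simp: free_tensors_iff)
    then have "tensor_coeff x [] = x []" by (simp add: tensor_coeff_eq_sum[of "{[]}"])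
    with that "0.prems" show "x s = 0" by (cases s) (auto simp: free_tensors_def)
  qed
  then show ?case using tensor_coeff_relation tensor_relations.zero by auto
next
  case (Suc m)
  have "hd ` supp x \<subseteq> puiseux"
  proof
    fix f assume "f \<in> hd ` supp x"
    then obtain t where "t \<in> supp x" "f = hd t" by blast
    with Suc.prems have "f = hd t" "length t = Suc m" "set t \<subseteq> puiseux"
      by (auto simp: free_tensors_iff)
    then show "f \<in> puiseux" by (cases t) auto
  qed
  moreover have "finite (hd ` supp x)" using Suc.prems by (simp add: free_tensors_iff)
  ultimately have "x \<in> tensor_relations (Suc m)" if "\<forall>e. length e = Suc m \<longrightarrow> tensor_coeff x e = 0"
    using relations_if_tensor_coeff_vanishes_Suc[of m "hd ` supp x" x] Suc that by blast
  then show ?case using tensor_coeff_relation by blast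
qed

section \<open>Multiplication as convolution of coefficients\<close>

definition conv_support :: "(rat \<Rightarrow> real) list \<Rightarrow> (rat \<Rightarrow> real) list \<Rightarrow> rat list \<Rightarrow> rat list set" where
  "conv_support t u e =
    {a. length a = length e \<and> simple_coeff t a \<noteq> 0 \<and> simple_coeff u (map2 (-) e a) \<noteq> 0}"

lemma conv_support_Cons:
  "conv_support (f # t) (g # u) (q # e) =
    (\<lambda>(a0, a). a0 # a) ` ({a0. f a0 \<noteq> 0 \<and> g (q - a0) \<noteq> 0} \<times> conv_support t u e)"
  by (auto simp: conv_support_def length_Suc_conv image_iff)

lemma simple_coeff_map2_pmult_conv:
  "length t = length e \<Longrightarrow> length u = length e \<Longrightarrow> set t \<subseteq> puiseux \<Longrightarrow> set u \<subseteq> puiseux \<Longrightarrow>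
    finite (conv_support t u e) \<and>
    simple_coeff (map2 pmult t u) e =
      (\<Sum>a\<in>conv_support t u e. simple_coeff t a * simple_coeff u (map2 (-) e a))"
proof (induction t arbitrary: u e)
  case Nil
  then have "conv_support [] u e = {[]}" by (auto simp: conv_support_def)
  with Nil show ?case by simp
next
  case (Cons f t)
  obtain g u' q e' where ue: "u = g # u'" "e = q # e'"
    using Cons.prems by (cases u; cases e) auto
  let ?A0 = "{a0. f a0 \<noteq> 0 \<and> g (q - a0) \<noteq> 0}" and ?C = "conv_support t u' e'"
  have IH: "finite ?C" "simple_coeff (map2 pmult t u') e' =
      (\<Sum>a\<in>?C. simple_coeff t a * simple_coeff u' (map2 (-) e' a))"
    using Cons ue by auto
  have A0: "finite ?A0" using Cons.prems ue by (intro finite_pmult_support) auto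
  have inj: "inj_on (\<lambda>(a0, a). a0 # a) (?A0 \<times> ?C)" by (auto simp: inj_on_def)
  have "(\<Sum>a\<in>conv_support (f # t) u e. simple_coeff (f # t) a * simple_coeff u (map2 (-) e a)) =
      (\<Sum>(a0, a)\<in>?A0 \<times> ?C.
        (f a0 * g (q - a0)) * (simple_coeff t a * simple_coeff u' (map2 (-) e' a)))"
    unfolding ue conv_support_Cons sum.reindex[OF inj] by (rule sum.cong) (auto simp: ue)
  also have "\<dots> = (\<Sum>a0\<in>?A0. f a0 * g (q - a0)) *
      (\<Sum>a\<in>?C. simple_coeff t a * simple_coeff u' (map2 (-) e' a))"
    by (simp add: sum.cartesian_product[symmetric] sum_product)
  also have "\<dots> = simple_coeff (map2 pmult (f # t) u) e"
    using IH by (simp add: pmult_def ue)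
  finally show ?case using A0 IH by (simp add: ue conv_support_Cons)
qed

lemma simple_coeff_map2_pmult:
  assumes "length t = length e" "length u = length e" "set t \<subseteq> puiseux" "set u \<subseteq> puiseux"
    and K: "finite K" "conv_support t u e \<subseteq> K" "K \<subseteq> {a. length a = length e}"
  shows "simple_coeff (map2 pmult t u) e = (\<Sum>a\<in>K. simple_coeff t a * simple_coeff u (map2 (-) e a))"
proof -
  have "simple_coeff (map2 pmult t u) e =
      (\<Sum>a\<in>conv_support t u e. simple_coeff t a * simple_coeff u (map2 (-) e a))"
    using simple_coeff_map2_pmult_conv[OF assms(1-4)] by simp
  also have "\<dots> = (\<Sum>a\<in>K. simple_coeff t a * simple_coeff u (map2 (-) e a))"
    using K by (intro sum.mono_neutral_left) (auto simp: conv_support_def)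
  finally show ?thesis .
qed

lemma set_map2_pmult_puiseux:
  "set t \<subseteq> puiseux \<Longrightarrow> set u \<subseteq> puiseux \<Longrightarrow> set (map2 pmult t u) \<subseteq> puiseux"
proof (induction t arbitrary: u)
  case (Cons f t)
  then show ?case by (cases u) (auto intro: puiseux_pmult)
qed simp

lemma tensor_mult_eq_sum:
  assumes "finite (supp x)" "finite (supp y)"
  shows "tensor_mult x y =
    (\<lambda>s. \<Sum>(t, u)\<in>supp x \<times> supp y. x t * y u * simple_tensor (map2 pmult t u) s)"
proof
  fix s
  have "{(t, u). x t \<noteq> 0 \<and> y u \<noteq> 0 \<and> map2 pmult t u = s} =
      {p \<in> supp x \<times> supp y. map2 pmult (fst p) (snd p) = s}"
    by (auto simp: supp_def)
  then have "tensor_mult x y s = (\<Sum>p\<in>supp x \<times> supp y.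
      if map2 pmult (fst p) (snd p) = s then x (fst p) * y (snd p) else 0)"
    using assms by (simp add: tensor_mult_def sum.inter_filter case_prod_beta)
  also have "\<dots> = (\<Sum>(t, u)\<in>supp x \<times> supp y. x t * y u * simple_tensor (map2 pmult t u) s)"
    by (rule sum.cong) (auto simp: simple_tensor_def)
  finally show "tensor_mult x y s = \<dots>" .
qed

lemma
  assumes x: "x \<in> free_tensors m" and y: "y \<in> free_tensors m"
  shows free_tensors_mult: "tensor_mult x y \<in> free_tensors m"
    and tensor_coeff_mult: "tensor_coeff (tensor_mult x y) e =
      (\<Sum>(t, u)\<in>supp x \<times> supp y. x t * y u * simple_coeff (map2 pmult t u) e)"
proof -
  have fin: "finite (supp x)" "finite (supp y)" using x y by (simp_all add: free_tensors_iff)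
  have free:
    "(\<lambda>s. case p of (t, u) \<Rightarrow> x t * y u * simple_tensor (map2 pmult t u) s) \<in> free_tensors m"
    if pxy: "p \<in> supp x \<times> supp y" for p
  proof -
    obtain t u where p: "p = (t, u)" "t \<in> supp x" "u \<in> supp y" using pxy by (cases p) auto
    then have "length t = m" "set t \<subseteq> puiseux" "length u = m" "set u \<subseteq> puiseux"
      using x y by (auto simp: free_tensors_iff)
    then have "simple_tensor (map2 pmult t u) \<in> free_tensors m"
      by (intro free_tensors_simple_tensor set_map2_pmult_puiseux) simp_all
    then show ?thesis unfolding p(1) by (simp add: free_tensors_scale)
  qed
  show "tensor_mult x y \<in> free_tensors m"
    unfolding tensor_mult_eq_sum[OF fin] by (rule free_tensors_sum) (simp_all add: fin free)
  have "tensor_coeff (tensor_mult x y) e = (\<Sum>p\<in>supp x \<times> supp y.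
      tensor_coeff (\<lambda>s. case p of (t, u) \<Rightarrow> x t * y u * simple_tensor (map2 pmult t u) s) e)"
    unfolding tensor_mult_eq_sum[OF fin]
    by (rule tensor_coeff_sum[of _ _ m]) (simp_all add: fin free)
  then show "tensor_coeff (tensor_mult x y) e =
      (\<Sum>(t, u)\<in>supp x \<times> supp y. x t * y u * simple_coeff (map2 pmult t u) e)"
    by (simp add: tensor_coeff_scale tensor_coeff_simple_tensor split_def)
qed

lemma tensor_coeff_mult_conv:
  assumes x: "x \<in> free_tensors m" and y: "y \<in> free_tensors m" and e: "length e = m"
    and K: "finite K" "K \<subseteq> {a. length a = m}" "\<forall>t\<in>supp x. \<forall>u\<in>supp y. conv_support t u e \<subseteq> K"
  shows "tensor_coeff (tensor_mult x y) e =
    (\<Sum>a\<in>K. tensor_coeff x a * tensor_coeff y (map2 (-) e a))"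
proof -
  have "simple_coeff (map2 pmult t u) e = (\<Sum>a\<in>K. simple_coeff t a * simple_coeff u (map2 (-) e a))"
    if "t \<in> supp x" "u \<in> supp y" for t u
    using x y e K that by (intro simple_coeff_map2_pmult) (auto simp: free_tensors_iff)
  then have "tensor_coeff (tensor_mult x y) e =
      (\<Sum>(t, u)\<in>supp x \<times> supp y.
        x t * y u * (\<Sum>a\<in>K. simple_coeff t a * simple_coeff u (map2 (-) e a)))"
    unfolding tensor_coeff_mult[OF x y] by (intro sum.cong) auto
  also have "\<dots> = (\<Sum>a\<in>K. \<Sum>t\<in>supp x. \<Sum>u\<in>supp y.
      (x t * simple_coeff t a) * (y u * simple_coeff u (map2 (-) e a)))"
    by (simp add: sum.cartesian_product[symmetric] sum_distrib_left sum.swap[of _ K] algebra_simps)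
  also have "\<dots> = (\<Sum>a\<in>K. tensor_coeff x a * tensor_coeff y (map2 (-) e a))"
    by (simp add: tensor_coeff_def sum_product)
  finally show ?thesis .
qed

definition lex_pos :: "nat \<Rightarrow> (rat list \<Rightarrow> real) \<Rightarrow> bool" where
  "lex_pos m F \<longleftrightarrow> (\<exists>e. length e = m \<and> F e > 0 \<and> (\<forall>e'. length e' = m \<and> e' < e \<longrightarrow> F e' = 0))"

lemma lex_posI:
  "length e = m \<Longrightarrow> F e > 0 \<Longrightarrow> (\<And>e'. length e' = m \<Longrightarrow> e' < e \<Longrightarrow> F e' = 0) \<Longrightarrow> lex_pos m F"
  unfolding lex_pos_def by blast

lemma lex_posE:
  assumes "lex_pos m F"
  obtains e where "length e = m" "F e > 0" "\<And>e'. length e' = m \<Longrightarrow> e' < e \<Longrightarrow> F e' = 0"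
  using assms unfolding lex_pos_def by blast

lemma lex_pos_cong: "lex_pos m F \<Longrightarrow> (\<And>e. length e = m \<Longrightarrow> G e = F e) \<Longrightarrow> lex_pos m G"
  unfolding lex_pos_def by metis

lemma lex_pos_nonzero: "lex_pos m F \<Longrightarrow> \<exists>e. length e = m \<and> F e \<noteq> 0"
  unfolding lex_pos_def by force

lemma not_lex_pos_and_neg: "lex_pos m F \<Longrightarrow> \<not> lex_pos m (\<lambda>e. - F e)"
proof
  assume "lex_pos m F" "lex_pos m (\<lambda>e. - F e)"
  then obtain e1 e2 where "length e1 = m" "F e1 > 0" "\<And>e'. length e' = m \<Longrightarrow> e' < e1 \<Longrightarrow> F e' = 0"
    and "length e2 = m" "- F e2 > 0" "\<And>e'. length e' = m \<Longrightarrow> e' < e2 \<Longrightarrow> - F e' = 0"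
    by (auto elim!: lex_posE)
  then show False by (cases e1 e2 rule: linorder_cases) force+
qed

lemma lex_pos_add:
  assumes "lex_pos m F" "lex_pos m G"
  shows "lex_pos m (\<lambda>e. F e + G e)"
proof -
  obtain e1 where e1: "length e1 = m" "F e1 > 0" "\<And>e'. length e' = m \<Longrightarrow> e' < e1 \<Longrightarrow> F e' = 0"
    using assms(1) unfolding lex_pos_def by blast
  obtain e2 where e2: "length e2 = m" "G e2 > 0" "\<And>e'. length e' = m \<Longrightarrow> e' < e2 \<Longrightarrow> G e' = 0"
    using assms(2) unfolding lex_pos_def by blast
  show ?thesis
  proof (rule lex_posI)
    show "length (min e1 e2) = m" using e1 e2 by (simp add: min_def)
    show "F (min e1 e2) + G (min e1 e2) > 0"
      using e1 e2 by (cases e1 e2 rule: linorder_cases) (auto simp: min_def)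
    fix e' assume "length e' = m" "e' < min e1 e2"
    with e1 e2 show "F e' + G e' = 0" by simp
  qed
qed

lemma lex_pos_simple_coeff: "set us \<subseteq> puiseux_pos \<Longrightarrow> lex_pos (length us) (simple_coeff us)"
proof (induction us)
  case Nil
  show ?case by (rule lex_posI[of "[]"]) auto
next
  case (Cons f us)
  obtain e where e: "length e = length us" "simple_coeff us e > 0"
    "\<And>e'. length e' = length us \<Longrightarrow> e' < e \<Longrightarrow> simple_coeff us e' = 0"
    using Cons by (auto elim: lex_posE)
  obtain q where q: "f q > 0" "\<And>p. p < q \<Longrightarrow> f p = 0"
    using Cons.prems by (auto simp: puiseux_pos_def)
  show ?case
  proof (rule lex_posI[of "q # e"])
    fix e' assume "length e' = length (f # us)" "e' < q # e"
    with e q show "simple_coeff (f # us) e' = 0" by (cases e') auto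
  qed (use e q in simp_all)
qed

lemma simple_coeff_nonzero_support:
  "length t = length e \<Longrightarrow> simple_coeff t e \<noteq> 0 \<Longrightarrow> q \<in> set e \<Longrightarrow> \<exists>f\<in>set t. f q \<noteq> 0"
proof (induction t arbitrary: e)
  case (Cons f t)
  then show ?case by (cases e) auto
qed simp

lemma tensor_coeff_support_grid:
  assumes x: "x \<in> free_tensors m"
  obtains n M where "n > 0" "\<And>e. length e = m \<Longrightarrow> tensor_coeff x e \<noteq> 0 \<Longrightarrow> set e \<subseteq> grid n M"
proof -
  let ?F = "\<Union>t\<in>supp x. set t"
  have "finite ?F" "?F \<subseteq> puiseux" using x by (auto simp: free_tensors_iff)
  then obtain n M where n: "n > 0" and F: "\<forall>f\<in>?F. {q. f q \<noteq> 0} \<subseteq> grid n M"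
    by (metis puiseux_common_grid)
  have "set e \<subseteq> grid n M" if "length e = m" "tensor_coeff x e \<noteq> 0" for e
  proof
    fix q assume "q \<in> set e"
    obtain t where t: "t \<in> supp x" "simple_coeff t e \<noteq> 0"
      using \<open>tensor_coeff x e \<noteq> 0\<close> unfolding tensor_coeff_def
      by (auto elim: sum.not_neutral_contains_not_neutral)
    then have "length t = length e" using x that(1) by (auto simp: free_tensors_iff)
    then obtain f where "f \<in> set t" "f q \<noteq> 0"
      using simple_coeff_nonzero_support t(2) \<open>q \<in> set e\<close> by blast
    moreover from this(1) have "f \<in> ?F" using t(1) by blast
    ultimately show "q \<in> grid n M" using F by blast
  qed
  from n this show thesis by (rule that)
qed

lemma lex_pos_or_neg:
  assumes "n > 0" "\<And>e. length e = m \<Longrightarrow> F e \<noteq> 0 \<Longrightarrow> set e \<subseteq> grid n M"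
    and "\<exists>e. length e = m \<and> F e \<noteq> 0"
  shows "lex_pos m F \<or> lex_pos m (\<lambda>e. - F e)"
proof -
  let ?S = "{e. length e = m \<and> F e \<noteq> 0}"
  obtain e0 where e0: "e0 \<in> ?S" "\<forall>e\<in>?S. e0 \<le> e"
    using lex_has_least[OF assms(1), of ?S m M] assms(2,3) by blast
  have below: "F e = 0" if "length e = m" "e < e0" for e
    using e0(2) that by force
  show ?thesis
  proof (cases "F e0 > 0")
    case True
    then show ?thesis using e0(1) below by (auto intro: lex_posI)
  next
    case False
    then have "lex_pos m (\<lambda>e. - F e)" using e0(1) below by (intro lex_posI[of e0]) auto
    then show ?thesis ..
  qed
qed

lemma tensor_coeff_mult_leading:
  assumes x: "x \<in> free_tensors m" and y: "y \<in> free_tensors m"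
    and a: "length a = m" "\<And>e'. length e' = m \<Longrightarrow> e' < a \<Longrightarrow> tensor_coeff x e' = 0"
    and b: "\<And>e'. length e' = m \<Longrightarrow> e' < b \<Longrightarrow> tensor_coeff y e' = 0"
    and e: "length e = m" "map2 (-) e a \<le> b"
  shows "tensor_coeff (tensor_mult x y) e = tensor_coeff x a * tensor_coeff y (map2 (-) e a)"
proof -
  \<comment> \<open>In the convolution only \<open>a\<close> contributes: below \<open>a\<close> the coefficients of \<open>x\<close> vanish,
    and above \<open>a\<close> we get \<open>e - a' < e - a \<le> b\<close>, where those of \<open>y\<close> vanish.\<close>
  define K where "K = insert a (\<Union>t\<in>supp x. \<Union>u\<in>supp y. conv_support t u e)"
  have "finite (conv_support t u e)" if "t \<in> supp x" "u \<in> supp y" for t u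
    using x y e(1) that simple_coeff_map2_pmult_conv[of t e u] by (auto simp: free_tensors_iff)
  then have K: "finite K" using x y by (auto simp: K_def free_tensors_iff)
  have K_len: "K \<subseteq> {a. length a = m}" using a(1) e(1) by (auto simp: K_def conv_support_def)
  have rest: "tensor_coeff x a' * tensor_coeff y (map2 (-) e a') = 0" if "a' \<in> K - {a}" for a'
  proof -
    have a': "length a' = m" "a' \<noteq> a" using that K_len by auto
    show ?thesis
    proof (cases "a' < a")
      case False
      with a' have "map2 (-) e a' < map2 (-) e a"
        using a(1) e(1) by (intro map2_diff_less_map2_diff_left) auto
      with e(2) have "map2 (-) e a' < b" by simp
      with a' e(1) b show ?thesis by simp
    qed (use a' a(2) in simp)
  qed
  have "tensor_coeff (tensor_mult x y) e =
      (\<Sum>a'\<in>K. tensor_coeff x a' * tensor_coeff y (map2 (-) e a'))"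
    using K K_len by (intro tensor_coeff_mult_conv[OF x y e(1)]) (auto simp: K_def)
  also have "\<dots> = tensor_coeff x a * tensor_coeff y (map2 (-) e a)
      + (\<Sum>a'\<in>K - {a}. tensor_coeff x a' * tensor_coeff y (map2 (-) e a'))"
    using K by (intro sum.remove) (auto simp: K_def)
  also have "(\<Sum>a'\<in>K - {a}. tensor_coeff x a' * tensor_coeff y (map2 (-) e a')) = 0"
    using rest by (intro sum.neutral) blast
  finally show ?thesis by simp
qed

lemma lex_pos_mult:
  assumes x: "x \<in> free_tensors m" and y: "y \<in> free_tensors m"
    and "lex_pos m (tensor_coeff x)" "lex_pos m (tensor_coeff y)"
  shows "lex_pos m (tensor_coeff (tensor_mult x y))"
proof -
  obtain a where a: "length a = m" "tensor_coeff x a > 0"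
    "\<And>e'. length e' = m \<Longrightarrow> e' < a \<Longrightarrow> tensor_coeff x e' = 0"
    using assms(3) unfolding lex_pos_def by blast
  obtain b where b: "length b = m" "tensor_coeff y b > 0"
    "\<And>e'. length e' = m \<Longrightarrow> e' < b \<Longrightarrow> tensor_coeff y e' = 0"
    using assms(4) unfolding lex_pos_def by blast
  note leading = tensor_coeff_mult_leading[where b = b, OF x y a(1,3) b(3)]
  define c where "c = map2 (+) a b"
  have c: "length c = m" "map2 (-) c a = b"
    using a(1) b(1) by (simp_all add: c_def map2_add_diff_cancel_left)
  show ?thesis
  proof (rule lex_posI[of c])
    show "tensor_coeff (tensor_mult x y) c > 0" using leading[of c] a b c by simp
    fix e' assume e': "length e' = m" "e' < c"
    then have "map2 (-) e' a < b"
      using map2_diff_less_map2_diff_right[of e' a c] a(1) c by simp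
    with e' a(1) b(3) leading[of e'] show "tensor_coeff (tensor_mult x y) e' = 0" by simp
  qed (fact c)
qed

section \<open>The positive cone\<close>

definition tensor_pos :: "nat \<Rightarrow> ((rat \<Rightarrow> real) list \<Rightarrow> real) set" where
  "tensor_pos m = {x \<in> free_tensors m. lex_pos m (tensor_coeff x)}"

lemma tensor_equiv_zero_iff:
  "x \<in> free_tensors m \<Longrightarrow> tensor_equiv m x (\<lambda>_. 0) \<longleftrightarrow> (\<forall>e. length e = m \<longrightarrow> tensor_coeff x e = 0)"
  by (simp add: tensor_equiv_def tensor_relations_iff_coeff_vanishes)

lemma tensor_pos_equiv:
  "x \<in> tensor_pos m \<Longrightarrow> y \<in> free_tensors m \<Longrightarrow> tensor_equiv m x y \<Longrightarrow> y \<in> tensor_pos m"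
  unfolding tensor_pos_def tensor_equiv_def
  by (auto intro: lex_pos_cong tensor_coeff_eq_if_diff_relation)

lemma uminus_tensor_pos_iff:
  assumes "x \<in> free_tensors m"
  shows "(\<lambda>s. - x s) \<in> tensor_pos m \<longleftrightarrow> lex_pos m (\<lambda>e. - tensor_coeff x e)"
proof -
  have "(\<lambda>s. - x s) \<in> free_tensors m" using free_tensors_scale[OF assms, of "-1"] by simp
  moreover have "tensor_coeff (\<lambda>s. - x s) = (\<lambda>e. - tensor_coeff x e)"
    using tensor_coeff_scale[of "-1" x] by (simp add: fun_eq_iff)
  ultimately show ?thesis by (simp add: tensor_pos_def)
qed

lemma tensor_pos_trichotomy:
  assumes x: "x \<in> free_tensors m"
  shows "(x \<in> tensor_pos m \<or> tensor_equiv m x (\<lambda>_. 0) \<or> (\<lambda>s. - x s) \<in> tensor_pos m) \<and>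
    \<not> (x \<in> tensor_pos m \<and> tensor_equiv m x (\<lambda>_. 0)) \<and>
    \<not> (x \<in> tensor_pos m \<and> (\<lambda>s. - x s) \<in> tensor_pos m) \<and>
    \<not> (tensor_equiv m x (\<lambda>_. 0) \<and> (\<lambda>s. - x s) \<in> tensor_pos m)"
proof -
  obtain n M where "n > 0" "\<And>e. length e = m \<Longrightarrow> tensor_coeff x e \<noteq> 0 \<Longrightarrow> set e \<subseteq> grid n M"
    using tensor_coeff_support_grid[OF x] by blast
  then have "lex_pos m (tensor_coeff x) \<or> (\<forall>e. length e = m \<longrightarrow> tensor_coeff x e = 0) \<or>
      lex_pos m (\<lambda>e. - tensor_coeff x e)"
    using lex_pos_or_neg by blast
  moreover have "\<not> (lex_pos m (tensor_coeff x) \<and> (\<forall>e. length e = m \<longrightarrow> tensor_coeff x e = 0))"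
    using lex_pos_nonzero[of m "tensor_coeff x"] by blast
  moreover have "\<not> (lex_pos m (\<lambda>e. - tensor_coeff x e) \<and> (\<forall>e. length e = m \<longrightarrow> tensor_coeff x e = 0))"
    using lex_pos_nonzero[of m "\<lambda>e. - tensor_coeff x e"] by auto
  moreover have "\<not> (lex_pos m (tensor_coeff x) \<and> lex_pos m (\<lambda>e. - tensor_coeff x e))"
    using not_lex_pos_and_neg by blast
  ultimately show ?thesis
    unfolding tensor_equiv_zero_iff[OF x] uminus_tensor_pos_iff[OF x] using x
    by (auto simp: tensor_pos_def)
qed

lemma tensor_pos_add:
  assumes "x \<in> tensor_pos m" "y \<in> tensor_pos m"
  shows "(\<lambda>s. x s + y s) \<in> tensor_pos m"
proof -
  have x: "x \<in> free_tensors m" "lex_pos m (tensor_coeff x)"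
    and y: "y \<in> free_tensors m" "lex_pos m (tensor_coeff y)"
    using assms by (simp_all add: tensor_pos_def)
  have "lex_pos m (tensor_coeff (\<lambda>s. x s + y s))"
    using lex_pos_add[OF x(2) y(2)]
    by (rule lex_pos_cong) (simp add: tensor_coeff_add[OF x(1) y(1)])
  with x(1) y(1) show ?thesis by (simp add: tensor_pos_def free_tensors_add)
qed

lemma tensor_pos_mult: "x \<in> tensor_pos m \<Longrightarrow> y \<in> tensor_pos m \<Longrightarrow> tensor_mult x y \<in> tensor_pos m"
  unfolding tensor_pos_def by (simp add: free_tensors_mult lex_pos_mult)

lemma simple_tensor_pos:
  assumes "length us = m" "set us \<subseteq> puiseux_pos"
  shows "simple_tensor us \<in> tensor_pos m"
proof -
  have "set us \<subseteq> puiseux" using assms(2) by (auto simp: puiseux_pos_def)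
  with assms lex_pos_simple_coeff[OF assms(2)] show ?thesis
    by (simp add: tensor_pos_def free_tensors_simple_tensor tensor_coeff_simple_tensor)
qed

theorem mainTheorem8:
  fixes m :: nat
  shows "\<exists>P \<subseteq> free_tensors m.
    (\<forall>x\<in>P. \<forall>y\<in>free_tensors m. tensor_equiv m x y \<longrightarrow> y \<in> P) \<and>
    (\<forall>x\<in>free_tensors m.
        (x \<in> P \<or> tensor_equiv m x (\<lambda>_. 0) \<or> (\<lambda>s. - x s) \<in> P) \<and>
        \<not> (x \<in> P \<and> tensor_equiv m x (\<lambda>_. 0)) \<and>
        \<not> (x \<in> P \<and> (\<lambda>s. - x s) \<in> P) \<and>
        \<not> (tensor_equiv m x (\<lambda>_. 0) \<and> (\<lambda>s. - x s) \<in> P)) \<and>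
    (\<forall>x\<in>P. \<forall>y\<in>P. (\<lambda>s. x s + y s) \<in> P) \<and>
    (\<forall>x\<in>P. \<forall>y\<in>P. tensor_mult x y \<in> P) \<and>
    (\<forall>us. length us = m \<and> set us \<subseteq> puiseux_pos \<longrightarrow> simple_tensor us \<in> P)"
proof (intro exI[of _ "tensor_pos m"] conjI)
  show "tensor_pos m \<subseteq> free_tensors m" by (auto simp: tensor_pos_def)
qed (use tensor_pos_equiv tensor_pos_trichotomy tensor_pos_add tensor_pos_mult simple_tensor_pos
      in blast)+

end
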